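(* Let $\mathbf{C}=\mathbf{C}_1\,\dot\cup\,\mathbf{C}_2$ and $\mathbf{B}=\mathbf{B}_+\,\dot\cup\,\mathbf{B}'\in\dot{\mathbb{P}}(\mathbb{L}(\mathbf{C}_1))$ with $|\mathbf{B}|=|\mathbf{C}_1|$, and suppose every $L\in\mathbf{B}_+$ has a positive monotonic effect on $D$ relative to $\mathbf{C}$. If for some tree $\mathfrak{T}$ on $\mathbf{B}_+$, some $\omega^*\in\Omega$ and some values $\mathbf{c}_2$ of $\mathbf{C}_2$, $$D_{\mathbf{B}=\mathbf{1},\mathbf{C}_2=\mathbf{c}_2}(\omega^* )-\sum_{L\in\mathbf{B}}D_{\mathbf{B}\setminus\{L\}=\mathbf{1},L=0,\mathbf{C}_2=\mathbf{c}_2}(\omega^* )+\sum_{\mathbf{E}\in\mathfrak{T}}D_{\mathbf{B}\setminus\mathbf{E}=\mathbf{1},\mathbf{E}=\mathbf{0},\mathbf{C}_2=\mathbf{c}_2}(\omega^* )>0,$$ then $\mathbf{B}$ is irreducible for $\mathcal{D}(\mathbf{C},\Omega)$.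
   Context: Events are binary random variables on a population $\Omega$; $\overline{X}=1-X$; $\mathbb{L}(\mathbf{C})=\mathbf{C}\cup\{\overline{X}:X\in\mathbf{C}\}$; $\dot{\mathbb{P}}(\mathbb{L}(\mathbf{C}))$ is the set of subsets of $\mathbb{L}(\mathbf{C})$ not containing both $X$ and $\overline{X}$; $(L)_{\mathbf{c}}$ is the value of literal $L$ under assignment $\mathbf{c}$; $\bigwedge(\mathbf{B})=\min_{L\in\mathbf{B}}L$. Potential outcomes $\mathcal{D}(\mathbf{C},\Omega)$: $D_{\mathbf{c}}(\omega)\in\{0,1\}$ for all $\omega$, $\mathbf{c}$. Since $|\mathbf{B}|=|\mathbf{C}_1|$, setting the literals of $\mathbf{B}$ determines an assignment to $\mathbf{C}_1$; e.g. $D_{\mathbf{B}\setminus\mathbf{E}=\mathbf{1},\mathbf{E}=\mathbf{0},\mathbf{C}_2=\mathbf{c}_2}$ sets the literals in $\mathbf{E}$ to 0, the other literals of $\mathbf{B}$ to 1 and $\mathbf{C}_2$ to $\mathbf{c}_2$. A literal $L\in\mathbb{L}(\mathbf{C})$ has a positive monotonic effect on $D$ relative to $\mathbf{C}$ if for all $\omega$ and all pairs of assignments $\mathbf{c},\mathbf{c}'$ differing only in the variable underlying $L$, with $(L)_{\mathbf{c}}=1$ and $(L)_{\mathbf{c}'}=0$, one has $D_{\mathbf{c}}(\omega)\ge D_{\mathbf{c}'}(\omega)$. A tree on a finite set $\mathbf{S}$ is a set $\mathfrak{T}$ of 2-element subsets (edges) of $\mathbf{S}$ with $|\mathfrak{T}|=|\mathbf{S}|-1$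 such that every two distinct elements of $\mathbf{S}$ are joined by a path of edges (when $|\mathbf{B}_+|\le1$ the tree is empty). A sufficient cause representation $(\mathbf{A},\mathfrak{B})$ for $\mathcal{D}(\mathbf{C},\Omega)$ is a tuple $\mathbf{A}=\langle A_1,\dots,A_p\rangle$ of binary random variables on $\Omega$ unaffected by interventions on $\mathbf{C}$ and $\mathfrak{B}=\langle\mathbf{B}_1,\dots,\mathbf{B}_p\rangle$, $\mathbf{B}_i\in\dot{\mathbb{P}}(\mathbb{L}(\mathbf{C}))$, with: $D_{\mathbf{c}}(\omega)=1$ iff some $j$ has $A_j(\omega)=1$ and $(\bigwedge(\mathbf{B}_j))_{\mathbf{c}}=1$. $\mathbf{B}$ is irreducible for $\mathcal{D}(\mathbf{C},\Omega)$ if in every such representation some $\mathbf{B}_i\supseteq\mathbf{B}$. *)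

theory Defs
  imports "HOL-Library.FuncSet"
begin

datatype 'v lit = Pos 'v | Neg 'v

fun lvar :: "'v lit \<Rightarrow> 'v" where
  "lvar (Pos x) = x" | "lvar (Neg x) = x"

fun lcompl :: "'v lit \<Rightarrow> 'v lit" where
  "lcompl (Pos x) = Neg x" | "lcompl (Neg x) = Pos x"

definition lits :: "'v set \<Rightarrow> 'v lit set" where
  "lits C = Pos ` C \<union> Neg ` C"

definition consistent_subsets :: "'v set \<Rightarrow> 'v lit set set" where
  "consistent_subsets C = {B. B \<subseteq> lits C \<and> (\<forall>x. \<not> (Pos x \<in> B \<and> Neg x \<in> B))}"

definition assignments :: "'v set \<Rightarrow> ('v \<Rightarrow> bool) set" where
  "assignments C = C \<rightarrow>\<^sub>E (UNIV :: bool set)"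

fun lval :: "'v lit \<Rightarrow> ('v \<Rightarrow> bool) \<Rightarrow> bool" where
  "lval (Pos x) c = c x" | "lval (Neg x) c = (\<not> c x)"

definition conj_val :: "'v lit set \<Rightarrow> ('v \<Rightarrow> bool) \<Rightarrow> bool" where
  "conj_val B c = (\<forall>L\<in>B. lval L c)"

text \<open>The assignment B\E = 1, E = 0, C2 = c2: each literal of B (one per variable of C1)
  is set to 1 unless it lies in E, where it is set to 0; variables of C2 get c2.\<close>
definition interv ::
  "'v set \<Rightarrow> 'v set \<Rightarrow> 'v lit set \<Rightarrow> 'v lit set \<Rightarrow> ('v \<Rightarrow> bool) \<Rightarrow> 'v \<Rightarrow> bool" where
  "interv C1 C2 B E c2 x =
     (if x \<in> C1 then (if Pos x \<in> B then Pos x \<notin> E else Neg x \<in> E)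
      else if x \<in> C2 then c2 x else undefined)"

definition pos_monotonic ::
  "'v set \<Rightarrow> 'w set \<Rightarrow> (('v \<Rightarrow> bool) \<Rightarrow> 'w \<Rightarrow> bool) \<Rightarrow> 'v lit \<Rightarrow> bool" where
  "pos_monotonic C \<Omega> D L =
    (\<forall>\<omega>\<in>\<Omega>. \<forall>c\<in>assignments C. \<forall>c'\<in>assignments C.
       (\<forall>y. y \<noteq> lvar L \<longrightarrow> c y = c' y) \<and> lval L c \<and> \<not> lval L c'
       \<longrightarrow> (D c' \<omega> \<longrightarrow> D c \<omega>))"

definition tree_on :: "'a set \<Rightarrow> 'a set set \<Rightarrow> bool" where
  "tree_on S T =
    ((\<forall>e\<in>T. e \<subseteq> S \<and> card e = 2) \<and> card T = card S - 1 \<and>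
     (\<forall>a\<in>S. \<forall>b\<in>S. a \<noteq> b \<longrightarrow> (a, b) \<in> {(x, y). {x, y} \<in> T}\<^sup>*))"

definition suff_cause_rep ::
  "'v set \<Rightarrow> 'w set \<Rightarrow> (('v \<Rightarrow> bool) \<Rightarrow> 'w \<Rightarrow> bool)
   \<Rightarrow> (('w \<Rightarrow> bool) \<times> 'v lit set) list \<Rightarrow> bool" where
  "suff_cause_rep C \<Omega> D R =
    ((\<forall>j<length R. snd (R ! j) \<in> consistent_subsets C) \<and>
     (\<forall>\<omega>\<in>\<Omega>. \<forall>c\<in>assignments C.
        D c \<omega> = (\<exists>j<length R. fst (R ! j) \<omega> \<and> conj_val (snd (R ! j)) c)))"

definition irreducible ::
  "'v set \<Rightarrow> 'w set \<Rightarrow> (('v \<Rightarrow> bool) \<Rightarrow> 'w \<Rightarrow> bool) \<Rightarrow> 'v lit set \<Rightarrow> bool" where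
  "irreducible C \<Omega> D B =
    (\<forall>R. suff_cause_rep C \<Omega> D R \<longrightarrow> (\<exists>i<length R. B \<subseteq> snd (R ! i)))"

end

theory Submission
  imports Defs
begin

text \<open>Suppose some sufficient cause representation has no B_j containing B. If
  D(B = 1) holds, the active sufficient cause misses a literal L of B and stays active
  when L is switched off, so some singleton term cancels the leading term. By positive
  monotonicity, a tree edge E with D(B - E = 1, E = 0) has both endpoints in
  K = {L \<in> B+. D(B - {L} = 1, L = 0)}; the tree has at most |K| - 1 edges inside K,
  which are outweighed by the |K| singleton terms of K. Hence the contrast is at most 0.\<close>

lemma rtrancl_exits_set:
  assumes "(a, b) \<in> r\<^sup>*" "a \<in> K" "b \<notin> K"
  obtains x y where "(x, y) \<in> r" "x \<in> K" "y \<notin> K"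
  using assms by (induction rule: rtrancl_induct) blast+

lemma tree_on_finite_edges:
  assumes "tree_on S T" "finite S"
  shows "finite T"
proof -
  have "T \<subseteq> Pow S" using assms(1) unfolding tree_on_def by auto
  then show ?thesis using assms(2) by (meson finite_Pow_iff finite_subset)
qed

lemma tree_on_edgeE:
  assumes "tree_on S T" "E \<in> T"
  obtains x y where "E = {x, y}" "x \<noteq> y" "x \<in> S" "y \<in> S"
proof -
  have "E \<subseteq> S" "card E = 2"
    using assms unfolding tree_on_def by auto
  then show thesis
    using that by (auto simp: card_2_iff)
qed

lemma tree_on_crossing_edge:
  assumes "tree_on S T" "K \<subseteq> S" "a \<in> K" "b \<in> S - K"
  obtains x y where "{x, y} \<in> T" "x \<in> K" "y \<in> S - K"
proof -
  have connected: "\<forall>a\<in>S. \<forall>b\<in>S. a \<noteq> b \<longrightarrow> (a, b) \<in> {(x, y). {x, y} \<in> T}\<^sup>*"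
    using assms(1) unfolding tree_on_def by (elim conjE) assumption
  have "a \<in> S" "b \<in> S" "a \<noteq> b"
    using assms(2-4) by auto
  then have "(a, b) \<in> {(x, y). {x, y} \<in> T}\<^sup>*"
    using connected by blast
  then obtain x y where "(x, y) \<in> {(x, y). {x, y} \<in> T}" "x \<in> K" "y \<notin> K"
    using assms(3,4) by (auto elim: rtrancl_exits_set)
  then have "{x, y} \<in> T" "x \<in> K" "y \<notin> K" by simp_all
  moreover have "y \<in> S"
    using tree_on_edgeE[OF assms(1) \<open>{x, y} \<in> T\<close>] by (metis doubleton_eq_iff)
  ultimately show thesis using that by blast
qed

text \<open>Growing K along a crossing edge removes that edge from the crossing edges,
  so each vertex outside K accounts for at least one edge not inside K.\<close>
lemma tree_on_card_edges_leaving: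
  assumes "tree_on S T" "finite S" "K \<subseteq> S" "K \<noteq> {}"
  shows "card (S - K) \<le> card {E\<in>T. \<not> E \<subseteq> K}"
proof -
  have "n \<le> card {E\<in>T. \<not> E \<subseteq> K}"
    if "card (S - K) = n" "K \<subseteq> S" "K \<noteq> {}" for n K
    using that
  proof (induction n arbitrary: K)
    case 0
    then show ?case by simp
  next
    case (Suc n K)
    obtain a b where "a \<in> K" "b \<in> S - K"
      using Suc.prems by (metis all_not_in_conv card.empty nat.distinct(1))
    then obtain x y where xy: "{x, y} \<in> T" "x \<in> K" "y \<in> S - K"
      using tree_on_crossing_edge[OF assms(1) Suc.prems(2)] by blast
    have "S - insert y K = (S - K) - {y}" by blast
    then have "card (S - insert y K) = n"
      using Suc.prems(1) xy(3) assms(2) by simp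
    then have "n \<le> card {E\<in>T. \<not> E \<subseteq> insert y K}"
      using Suc.IH Suc.prems xy(3) by blast
    also have "\<dots> < card {E\<in>T. \<not> E \<subseteq> K}"
    proof (rule psubset_card_mono)
      show "finite {E\<in>T. \<not> E \<subseteq> K}"
        using tree_on_finite_edges[OF assms(1,2)] by simp
      have "{x, y} \<in> {E\<in>T. \<not> E \<subseteq> K}" "{x, y} \<notin> {E\<in>T. \<not> E \<subseteq> insert y K}"
        using xy by auto
      then show "{E\<in>T. \<not> E \<subseteq> insert y K} \<subset> {E\<in>T. \<not> E \<subseteq> K}"
        by blast
    qed
    finally show ?case by simp
  qed
  then show ?thesis using assms(3,4) by blast
qed

lemma tree_on_card_edges_within:
  assumes "tree_on S T" "finite S" "K \<subseteq> S"
  shows "card {E\<in>T. E \<subseteq> K} \<le> card K - 1"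
proof (cases "K = {}")
  case True
  then have "{E\<in>T. E \<subseteq> K} = {}"
    using tree_on_edgeE[OF assms(1)] by blast
  then show ?thesis by (metis card.empty zero_le)
next
  case False
  have "card T = card {E\<in>T. E \<subseteq> K} + card {E\<in>T. \<not> E \<subseteq> K}"
    using tree_on_finite_edges[OF assms(1,2)]
    by (subst card_Un_disjoint[symmetric]) (auto intro: arg_cong[where f = card])
  moreover have "card T = card S - 1"
    using assms(1) unfolding tree_on_def by simp
  moreover have "card S = card K + card (S - K)"
    using assms(2,3) by (simp add: card_Diff_subset card_mono finite_subset)
  ultimately show ?thesis
    using tree_on_card_edges_leaving[OF assms False] by linarith
qed

lemma tree_contrast_pos_imp:
  fixes d :: "'a set \<Rightarrow> bool"
  assumes "finite B" "S \<subseteq> B" "tree_on S T"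
    and edges_within: "\<And>E. E \<in> T \<Longrightarrow> d E \<Longrightarrow> E \<subseteq> {x\<in>S. d {x}}"
    and "(of_bool (d {}) :: int) - (\<Sum>x\<in>B. of_bool (d {x})) + (\<Sum>E\<in>T. of_bool (d E)) > 0"
  shows "d {} \<and> (\<forall>x\<in>B. \<not> d {x})"
proof -
  let ?K = "{x\<in>S. d {x}}"
  have "finite S" "finite T"
    using assms(1,2) finite_subset tree_on_finite_edges[OF assms(3)] by auto
  have "card (T \<inter> {E. d E}) \<le> card {E\<in>T. E \<subseteq> ?K}"
    using edges_within \<open>finite T\<close> by (intro card_mono) auto
  also have "\<dots> \<le> card ?K - 1"
    by (rule tree_on_card_edges_within[OF assms(3) \<open>finite S\<close>]) auto
  finally have "card (T \<inter> {E. d E}) \<le> card ?K - 1" .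
  moreover have "card ?K \<le> card (B \<inter> {x. d {x}})"
    using assms(1,2) by (intro card_mono) auto
  moreover have "(of_bool (d {}) :: int) - int (card (B \<inter> {x. d {x}})) + int (card (T \<inter> {E. d E})) > 0"
    using assms(5) assms(1) \<open>finite T\<close> by simp
  ultimately have "d {} \<and> card (B \<inter> {x. d {x}}) = 0"
    by (cases "d {}") auto
  then show ?thesis
    using assms(1) by auto
qed

lemma interv_in_assignments:
  "C = C1 \<union> C2 \<Longrightarrow> interv C1 C2 B E c2 \<in> assignments C"
  unfolding assignments_def interv_def by auto

lemma interv_insert_other:
  "y \<noteq> lvar L \<Longrightarrow> interv C1 C2 B (insert L E) c2 y = interv C1 C2 B E c2 y"
  unfolding interv_def by (cases L) auto

lemma lval_interv:
  assumes "B \<in> consistent_subsets C1" "L \<in> B"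
  shows "lval L (interv C1 C2 B E c2) \<longleftrightarrow> L \<notin> E"
  using assms unfolding consistent_subsets_def lits_def interv_def by (cases L) auto

lemma pos_monotonic_interv_insert:
  assumes "pos_monotonic C \<Omega> D L" "\<omega> \<in> \<Omega>" "C = C1 \<union> C2"
    and "B \<in> consistent_subsets C1" "L \<in> B" "L \<notin> E"
    and "D (interv C1 C2 B (insert L E) c2) \<omega>"
  shows "D (interv C1 C2 B E c2) \<omega>"
proof -
  have "\<forall>y. y \<noteq> lvar L \<longrightarrow> interv C1 C2 B E c2 y = interv C1 C2 B (insert L E) c2 y"
    by (simp add: interv_insert_other)
  moreover have "lval L (interv C1 C2 B E c2)" "\<not> lval L (interv C1 C2 B (insert L E) c2)"
    using lval_interv[OF assms(4,5)] assms(6) by auto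
  ultimately show ?thesis
    using assms(1,2,7) interv_in_assignments[OF assms(3)] unfolding pos_monotonic_def by blast
qed

lemma pos_monotonic_edge_outcome:
  assumes "\<forall>L\<in>S. pos_monotonic C \<Omega> D L" "S \<subseteq> B" "tree_on S T" "E \<in> T"
    and "\<omega> \<in> \<Omega>" "C = C1 \<union> C2" "B \<in> consistent_subsets C1"
    and "D (interv C1 C2 B E c2) \<omega>"
  shows "E \<subseteq> {L\<in>S. D (interv C1 C2 B {L} c2) \<omega>}"
proof -
  obtain u v where uv: "E = {u, v}" "u \<noteq> v" "u \<in> S" "v \<in> S"
    using tree_on_edgeE[OF assms(3,4)] .
  have "D (interv C1 C2 B {x} c2) \<omega>" if "E = {x, y}" "x \<noteq> y" "y \<in> S" for x y
  proof (rule pos_monotonic_interv_insert[where D = D and L = y])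
    show "D (interv C1 C2 B (insert y {x}) c2) \<omega>"
      using assms(8) that(1) by (simp add: insert_commute)
  qed (use that assms(1,2,5-7) in auto)
  from this[of u v] this[of v u] show ?thesis
    using uv by (auto simp: insert_commute)
qed

text \<open>A literal of M sharing its variable with L is L itself or its complement, and the
  complement is false wherever L is true.\<close>
lemma conj_val_interv_insert:
  assumes "B \<in> consistent_subsets C1" "L \<in> B" "L \<notin> E" "L \<notin> M"
    and "conj_val M (interv C1 C2 B E c2)"
  shows "conj_val M (interv C1 C2 B (insert L E) c2)"
  unfolding conj_val_def
proof
  fix N assume "N \<in> M"
  then have N: "lval N (interv C1 C2 B E c2)" "N \<noteq> L"
    using assms(4,5) unfolding conj_val_def by auto
  have L: "lval L (interv C1 C2 B E c2)"
    using lval_interv[OF assms(1,2)] assms(3) by simp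
  show "lval N (interv C1 C2 B (insert L E) c2)"
  proof (cases "lvar N = lvar L")
    case True
    with N L show ?thesis by (cases N; cases L) auto
  next
    case False
    then have "interv C1 C2 B (insert L E) c2 (lvar N) = interv C1 C2 B E c2 (lvar N)"
      by (rule interv_insert_other)
    with N(1) show ?thesis by (cases N) auto
  qed
qed

lemma suff_cause_rep_switch_off_one:
  assumes rep: "suff_cause_rep C \<Omega> D R" and no_superset: "\<forall>i<length R. \<not> B \<subseteq> snd (R ! i)"
    and "C = C1 \<union> C2" "B \<in> consistent_subsets C1" "\<omega> \<in> \<Omega>"
    and "D (interv C1 C2 B {} c2) \<omega>"
  obtains L where "L \<in> B" "D (interv C1 C2 B {L} c2) \<omega>"
proof -
  have assign: "interv C1 C2 B E c2 \<in> assignments C" for E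
    using interv_in_assignments[OF assms(3)] .
  obtain j where j: "j < length R" "fst (R ! j) \<omega>" "conj_val (snd (R ! j)) (interv C1 C2 B {} c2)"
    using rep assms(5,6) assign unfolding suff_cause_rep_def by blast
  obtain L where L: "L \<in> B" "L \<notin> snd (R ! j)"
    using no_superset j(1) by blast
  have "conj_val (snd (R ! j)) (interv C1 C2 B {L} c2)"
    using conj_val_interv_insert[OF assms(4) L(1) _ L(2) j(3)] by simp
  then have "D (interv C1 C2 B {L} c2) \<omega>"
    using rep assms(5) j(1,2) assign unfolding suff_cause_rep_def by blast
  with L(1) show thesis using that by blast
qed

theorem mainTheorem7:
  fixes C C1 C2 :: "'v set" and \<Omega> :: "'w set"
    and D :: "('v \<Rightarrow> bool) \<Rightarrow> 'w \<Rightarrow> bool"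
    and B Bplus B' :: "'v lit set" and T :: "'v lit set set"
    and \<omega>s :: 'w and c2 :: "'v \<Rightarrow> bool"
  assumes "finite C" and "C = C1 \<union> C2" and "C1 \<inter> C2 = {}"
    and "B = Bplus \<union> B'" and "Bplus \<inter> B' = {}"
    and "B \<in> consistent_subsets C1" and "card B = card C1"
    and "\<forall>L\<in>Bplus. pos_monotonic C \<Omega> D L"
    and "tree_on Bplus T" and "\<omega>s \<in> \<Omega>"
    and "(of_bool (D (interv C1 C2 B {} c2) \<omega>s) :: int)
         - (\<Sum>L\<in>B. of_bool (D (interv C1 C2 B {L} c2) \<omega>s))
         + (\<Sum>E\<in>T. of_bool (D (interv C1 C2 B E c2) \<omega>s)) > 0"
  shows "irreducible C \<Omega> D B"
proof -
  let ?d = "\<lambda>E. D (interv C1 C2 B E c2) \<omega>s"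
  have "finite B"
    using assms(1,2,6) unfolding consistent_subsets_def lits_def by (auto intro: finite_subset)
  moreover have "Bplus \<subseteq> B"
    using assms(4) by blast
  moreover have "E \<subseteq> {L\<in>Bplus. ?d {L}}" if "E \<in> T" "?d E" for E
    by (rule pos_monotonic_edge_outcome[OF assms(8) \<open>Bplus \<subseteq> B\<close> assms(9) that(1) assms(10,2,6) that(2)])
  ultimately have "?d {} \<and> (\<forall>L\<in>B. \<not> ?d {L})"
    by (rule tree_contrast_pos_imp[OF _ _ assms(9) _ assms(11)])
  then show ?thesis
    using suff_cause_rep_switch_off_one[of C \<Omega> D _ B C1 C2 \<omega>s c2] assms(2,6,10)
    unfolding irreducible_def by blast
qed

end
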